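(* Suppose that the following assumptions hold: (i) $L\in C^1(\mathbb{R}^2;\mathbb{R}^+\cup\{0\})$ is convex in $(x,v)$; (ii) $\Psi\in C^1(\mathbb{R};\mathbb{R}^+\cup\{0\})$ is convex; (iii) for some $C,\tilde C>0$, $\Psi(x)\leqslant C(1+|x|^2)$ and $|\Psi'(x)|\leqslant\tilde C(1+|x|)$ for all $x$; (iv) there exist $\tilde\beta,C>0$ with $L(x,v)\leqslant\tilde\beta(1+|v|^2)$ and $|L_x(x,v)|,|L_v(x,v)|\leqslant C(1+|v|)$ for all $(x,v)$; (v) for some $\alpha>0,\beta\geqslant0$, $\alpha|v|^2-\beta\leqslant L(x,v)$ for all $x,v$. Given an initial condition $x_0\in\mathbb{R}$ and a price process $\varpi\in\mathbb{H}_{\mathbb{F}}$, there exists an optimal control $v^*\in\mathbb{H}_{\mathbb{F}}$ that attains $\inf_{v\in\mathbb{H}_{\mathbb{F}}}\mathbb{E}\left[\int_0^T L(X_t,v_t)+\varpi_tv_t\,dt+\Psi(X_T)\right]$ subject to $dX_t=v_tdt$, $X_0=x_0$. Furthermore, if in addition for some $\theta>0$ the map $v\mapsto L(x,v)-\frac{\theta}{2}|v|^2$ is convex for all $x\in\mathbb{R}$, then $v^*$ is unique.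
   Context: $\mathbb{F}=(\mathcal{F}_t)_{0\leqslant t\leqslant T}$ is the standard filtration generated by a one-dimensional Brownian motion on a complete probability space; $\mathbb{H}_{\mathbb{F}}$ is the Hilbert space of measurable $\mathbb{F}$-adapted real processes $v$ on $[0,T]$ with $\mathbb{E}[\int_0^Tv_t^2dt]<\infty$ and inner product $\mathbb{E}[\int_0^Tv_tw_tdt]$. *)

theory Defs
  imports "HOL-Probability.Probability"
begin

definition brownian_motion :: "'a measure \<Rightarrow> (real \<Rightarrow> 'a \<Rightarrow> real) \<Rightarrow> bool" where
  "brownian_motion M B \<longleftrightarrow>
     prob_space M \<and>
     (\<forall>t\<ge>0. B t \<in> borel_measurable M) \<and>
     (AE \<omega> in M. B 0 \<omega> = 0) \<and>
     (AE \<omega> in M. continuous_on {0..} (\<lambda>t. B t \<omega>)) \<and>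
     (\<forall>s t. 0 \<le> s \<and> s < t \<longrightarrow>
        distributed M lborel (\<lambda>\<omega>. B t \<omega> - B s \<omega>) (normal_density 0 (sqrt (t - s)))) \<and>
     (\<forall>(tt::nat \<Rightarrow> real) n. 0 \<le> tt 0 \<and> (\<forall>i. tt i \<le> tt (Suc i)) \<longrightarrow>
        prob_space.indep_vars M (\<lambda>_. borel) (\<lambda>i \<omega>. B (tt (Suc i)) \<omega> - B (tt i) \<omega>) {..<n})"

definition brownian_filtration :: "'a measure \<Rightarrow> (real \<Rightarrow> 'a \<Rightarrow> real) \<Rightarrow> real \<Rightarrow> 'a measure" where
  "brownian_filtration M B t =
     sigma (space M) ({B s -` A \<inter> space M | s A. s \<in> {0..t} \<and> A \<in> sets borel} \<union> null_sets M)"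

definition time_space :: "real \<Rightarrow> 'a measure \<Rightarrow> (real \<times> 'a) measure" where
  "time_space T M = restrict_space lborel {0..T} \<Otimes>\<^sub>M M"

definition HF :: "'a measure \<Rightarrow> (real \<Rightarrow> 'a measure) \<Rightarrow> real \<Rightarrow> (real \<Rightarrow> 'a \<Rightarrow> real) \<Rightarrow> bool" where
  "HF M F T v \<longleftrightarrow>
     (\<lambda>(t, \<omega>). v t \<omega>) \<in> borel_measurable (time_space T M) \<and>
     (\<forall>t\<in>{0..T}. v t \<in> borel_measurable (F t)) \<and>
     (\<integral>\<^sup>+ p. ennreal ((v (fst p) (snd p))\<^sup>2) \<partial>(time_space T M)) < \<infinity>"

definition state :: "real \<Rightarrow> (real \<Rightarrow> 'a \<Rightarrow> real) \<Rightarrow> real \<Rightarrow> 'a \<Rightarrow> real" where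
  "state x0 v t \<omega> = x0 + set_lebesgue_integral lborel {0..t} (\<lambda>s. v s \<omega>)"

definition cost :: "'a measure \<Rightarrow> real \<Rightarrow> (real \<Rightarrow> real \<Rightarrow> real) \<Rightarrow> (real \<Rightarrow> real)
     \<Rightarrow> (real \<Rightarrow> 'a \<Rightarrow> real) \<Rightarrow> real \<Rightarrow> (real \<Rightarrow> 'a \<Rightarrow> real) \<Rightarrow> real" where
  "cost M T L \<Psi> \<pi> x0 v =
     (\<integral>\<omega>. set_lebesgue_integral lborel {0..T}
              (\<lambda>t. L (state x0 v t \<omega>) (v t \<omega>) + \<pi> t \<omega> * v t \<omega>)
           + \<Psi> (state x0 v T \<omega>) \<partial>M)"

end

theory Submission
  imports Defs
begin

text \<open>
  For fixed \<open>v\<close> the map \<open>x \<mapsto> L x v\<close> is convex and bounded above by \<open>\<beta>t (1 + v\<^sup>2)\<close>, hence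
  constant; so the cost only sees \<open>l = L 0\<close> and equals
  \<open>J v = E \<integral> l(v) + \<pi> v dt + E \<Psi>(X_T)\<close>. This \<open>J\<close> is convex on \<open>H_F\<close> and coercive
  (\<open>\<alpha> v\<^sup>2 - \<beta> \<le> l v\<close>, and Cauchy-Schwarz for the price term). Among the controls whose
  cost is within \<open>1/(n+1)\<close> of the infimum, choose one whose \<open>L\<^sup>2\<close> norm is within
  \<open>1/(n+1)\<close> of the least possible; midpoints of such controls are again near-optimal,
  so the parallelogram law makes this sequence Cauchy in \<open>L\<^sup>2\<close>. Its limit, realised as
  the a.e. limit of a subsequence and therefore still adapted, is optimal, because \<open>J\<close>
  is lower semicontinuous along sequences converging in \<open>L\<^sup>2\<close> and a.e.: Fatou's lemma
  handles the nonnegative terms \<open>l\<close> and \<open>\<Psi>\<close>, and the price term is continuous.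
  If moreover \<open>v \<mapsto> L x v - \<theta>/2 v\<^sup>2\<close> is convex, then \<open>J\<close> at the midpoint of two
  minimisers \<open>v, w\<close> lies \<open>\<theta>/8 \<parallel>v - w\<parallel>\<^sup>2\<close> below their common value, so \<open>v = w\<close> a.e.
\<close>

section \<open>Convex functions of a real variable\<close>

lemma convex_on_extrapolate:
  fixes g :: "real \<Rightarrow> real"
  assumes "convex_on UNIV g" and "0 \<le> s"
  shows "g b + s * (g b - g a) \<le> g (b + s * (b - a))"
proof -
  define z where "z = b + s * (b - a)"
  have pos: "0 < 1 + s" using \<open>0 \<le> s\<close> by simp
  then have e: "1 - s / (1 + s) = 1 / (1 + s)" by (simp add: field_simps)
  have "(1 - s / (1 + s)) *\<^sub>R z + (s / (1 + s)) *\<^sub>R a = (z + s * a) / (1 + s)"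
    unfolding e by (simp add: add_divide_distrib)
  also have "z + s * a = (1 + s) * b" by (simp add: z_def algebra_simps)
  finally have b: "b = (1 - s / (1 + s)) *\<^sub>R z + (s / (1 + s)) *\<^sub>R a"
    using pos by simp
  have "g b \<le> (1 - s / (1 + s)) * g z + (s / (1 + s)) * g a"
    using \<open>0 \<le> s\<close> by (subst b, intro convex_onD[OF assms(1)]) auto
  also have "\<dots> = (g z + s * g a) / (1 + s)"
    unfolding e by (simp add: add_divide_distrib)
  finally have "(1 + s) * g b \<le> g z + s * g a"
    using pos by (simp add: pos_le_divide_eq mult.commute)
  then show ?thesis by (simp add: z_def algebra_simps)
qed

lemma convex_on_bounded_above_imp_constant:
  fixes g :: "real \<Rightarrow> real"
  assumes convex: "convex_on UNIV g" and bounded: "\<And>x. g x \<le> K"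
  shows "g x = g y"
proof -
  have "g b \<le> g a" for a b
  proof (rule ccontr)
    assume "\<not> g b \<le> g a"
    define s where "s = (\<bar>K - g b\<bar> + 1) / (g b - g a)"
    have "0 \<le> s" and "s * (g b - g a) = \<bar>K - g b\<bar> + 1"
      using \<open>\<not> g b \<le> g a\<close> by (auto simp: s_def)
    with convex_on_extrapolate[OF convex, of s b a] bounded[of "b + s * (b - a)"]
    show False by linarith
  qed
  then show ?thesis by (meson order.antisym)
qed

lemma convex_on_slices:
  fixes L :: "real \<Rightarrow> real \<Rightarrow> real"
  assumes "convex_on UNIV (\<lambda>p. L (fst p) (snd p))"
  shows "convex_on UNIV (\<lambda>x. L x v)" and "convex_on UNIV (\<lambda>v. L x v)"
proof -
  have convex: "L ((1 - t) * x + t * y) ((1 - t) * v + t * w) \<le> (1 - t) * L x v + t * L y w"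
    if "0 < t" "t < 1" for t x y v w
    using convex_onD[OF assms, of t "(x, v)" "(y, w)"] that by simp
  have const: "(1 - t) * c + t * c = c" for t c :: real by (simp add: algebra_simps)
  show "convex_on UNIV (\<lambda>x. L x v)"
    by (rule convex_onI) (use convex[of _ _ _ v v] in \<open>simp_all add: const\<close>)
  show "convex_on UNIV (\<lambda>v. L x v)"
    by (rule convex_onI) (use convex[of _ x x] in \<open>simp_all add: const\<close>)
qed

lemma convex_on_midpoint:
  fixes g :: "real \<Rightarrow> real"
  assumes "convex_on UNIV g"
  shows "g ((x + y) / 2) \<le> (g x + g y) / 2"
  using convex_onD[OF assms, of "1/2" x y] by (simp add: field_simps)

lemma convex_minus_square_imp_midpoint:
  fixes g :: "real \<Rightarrow> real"
  assumes "convex_on UNIV (\<lambda>v. g v - \<theta> / 2 * \<bar>v\<bar>\<^sup>2)"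
  shows "g ((x + y) / 2) + \<theta> / 8 * (x - y)\<^sup>2 \<le> (g x + g y) / 2"
proof -
  have "g ((x + y) / 2) - \<theta> / 2 * ((x + y) / 2)\<^sup>2
      \<le> ((g x - \<theta> / 2 * x\<^sup>2) + (g y - \<theta> / 2 * y\<^sup>2)) / 2"
    using convex_on_midpoint[OF assms, of x y] by (simp add: power_divide power2_abs)
  moreover have "\<theta> / 8 * (x - y)\<^sup>2 = (\<theta> / 2 * x\<^sup>2 + \<theta> / 2 * y\<^sup>2) / 2 - \<theta> / 2 * ((x + y) / 2)\<^sup>2"
    by (simp add: power2_eq_square field_simps)
  ultimately show ?thesis by (simp add: field_simps)
qed

lemma power2_diff_le:
  fixes x y :: real
  shows "(x - y)\<^sup>2 \<le> 2 * x\<^sup>2 + 2 * y\<^sup>2"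
  using zero_le_power2[of "x + y"] by (simp add: power2_diff power2_sum)

lemma abs_le_mult_square_plus_inverse:
  fixes x d :: real
  assumes "0 < x"
  shows "\<bar>d\<bar> \<le> x * d\<^sup>2 + 1 / x"
proof (cases "x * \<bar>d\<bar> \<le> 1")
  case True
  then have "\<bar>d\<bar> \<le> 1 / x" using assms by (simp add: pos_le_divide_eq mult.commute)
  moreover have "0 \<le> x * d\<^sup>2" using assms by simp
  ultimately show ?thesis by linarith
next
  case False
  then have "x * \<bar>d\<bar> * 1 \<le> x * \<bar>d\<bar> * (x * \<bar>d\<bar>)" by (intro mult_left_mono) auto
  then have "\<bar>d\<bar> \<le> x * d\<^sup>2"
    using assms by (simp add: power2_eq_square abs_mult_self_eq mult_le_cancel_left_pos ac_simps)
  moreover have "0 \<le> 1 / x" using assms by simp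
  ultimately show ?thesis by linarith
qed

lemma quadratic_nonneg_imp_discriminant_le:
  fixes a b c :: real
  assumes nonneg: "\<And>t. 0 \<le> a + 2 * t * b + t\<^sup>2 * c" and "0 \<le> c"
  shows "b\<^sup>2 \<le> a * c"
proof (cases "c = 0")
  case True
  have "b = 0"
  proof (rule ccontr)
    assume "b \<noteq> 0"
    then have "a + 2 * (- (\<bar>a\<bar> + 1) / b) * b = a - 2 * (\<bar>a\<bar> + 1)"
      by (simp add: field_simps)
    with nonneg[of "- (\<bar>a\<bar> + 1) / b"] True show False by auto
  qed
  with True show ?thesis by simp
next
  case False
  with \<open>0 \<le> c\<close> have c: "0 < c" by simp
  have "a + 2 * (- b / c) * b + (- b / c)\<^sup>2 * c = a - b\<^sup>2 / c"
    using c by (simp add: field_simps power2_eq_square)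
  with nonneg[of "- b / c"] have "b\<^sup>2 / c \<le> a" by simp
  with c show ?thesis by (simp add: pos_divide_le_eq mult.commute)
qed

lemma tendsto_zero_of_square_le:
  fixes x y :: "nat \<Rightarrow> real"
  assumes "\<And>n. (x n)\<^sup>2 \<le> y n" and "y \<longlonglongrightarrow> 0"
  shows "x \<longlonglongrightarrow> 0"
proof (rule tendsto_rabs_zero_cancel, rule real_tendsto_sandwich[of "\<lambda>n. 0" _ _ "\<lambda>n. sqrt (y n)"])
  show "\<forall>\<^sub>F n in sequentially. \<bar>x n\<bar> \<le> sqrt (y n)"
    using real_sqrt_le_mono[OF assms(1)] by simp
  show "(\<lambda>n. sqrt (y n)) \<longlonglongrightarrow> 0"
    using tendsto_real_sqrt[OF assms(2)] by simp
qed auto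

lemma Cauchy_imp_fast_subseq:
  fixes d :: "nat \<Rightarrow> nat \<Rightarrow> real" and \<epsilon> :: "nat \<Rightarrow> real"
  assumes Cauchy: "\<And>e. 0 < e \<Longrightarrow> \<exists>n0. \<forall>n\<ge>n0. \<forall>k\<ge>n0. d n k < e" and "\<And>j. 0 < \<epsilon> j"
  shows "\<exists>r. strict_mono r \<and> (\<forall>j k. j \<le> k \<longrightarrow> d (r j) (r k) < \<epsilon> j)"
proof -
  obtain n0 where n0: "\<And>j n k. n0 j \<le> n \<Longrightarrow> n0 j \<le> k \<Longrightarrow> d n k < \<epsilon> j"
    using Cauchy[OF assms(2)] by metis
  define r where "r j = (\<Sum>i\<le>j. n0 i) + j" for j
  have "strict_mono r" unfolding strict_mono_Suc_iff r_def by simp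
  moreover have "n0 j \<le> r k" if "j \<le> k" for j k
  proof -
    have "n0 j \<le> (\<Sum>i\<le>k. n0 i)" using that by (intro member_le_sum) auto
    then show ?thesis by (simp add: r_def)
  qed
  ultimately show ?thesis by (blast intro: n0 strict_mono_mono[THEN monoD])
qed

lemma convergent_of_summable_weighted_square_increments:
  fixes y :: "nat \<Rightarrow> real"
  assumes "summable (\<lambda>j. 2^j * (y (Suc j) - y j)\<^sup>2)"
  shows "convergent y"
proof -
  have "summable (\<lambda>j. 2^j * (y (Suc j) - y j)\<^sup>2 + (1/2)^j)"
    using assms by (intro summable_add summable_geometric) auto
  then have "summable (\<lambda>j. y (Suc j) - y j)"
  proof (rule summable_comparison_test')
    fix j
    show "norm (y (Suc j) - y j) \<le> 2^j * (y (Suc j) - y j)\<^sup>2 + (1/2)^j"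
      using abs_le_mult_square_plus_inverse[of "2^j" "y (Suc j) - y j"] by (simp add: power_one_over)
  qed
  then have "convergent (\<lambda>n. (\<Sum>j<n. y (Suc j) - y j) + y 0)"
    by (intro convergent_add convergent_const) (simp add: summable_iff_convergent)
  moreover have "(\<Sum>j<n. y (Suc j) - y j) + y 0 = y n" for n
    by (induction n) simp_all
  ultimately show ?thesis by simp
qed

section \<open>Square-integrable functions\<close>

lemma integrable_mult_of_square_integrable:
  fixes f g :: "'b \<Rightarrow> real"
  assumes "f \<in> borel_measurable N" "g \<in> borel_measurable N"
    and "integrable N (\<lambda>x. (f x)\<^sup>2)" "integrable N (\<lambda>x. (g x)\<^sup>2)"
  shows "integrable N (\<lambda>x. f x * g x)"
proof (rule Bochner_Integration.integrable_bound)
  show "integrable N (\<lambda>x. (f x)\<^sup>2 + (g x)\<^sup>2)" using assms(3,4) by simp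
  show "AE x in N. norm (f x * g x) \<le> norm ((f x)\<^sup>2 + (g x)\<^sup>2)"
  proof (rule AE_I2)
    fix x
    have "2 * (\<bar>f x\<bar> * \<bar>g x\<bar>) \<le> (f x)\<^sup>2 + (g x)\<^sup>2"
      using sum_squares_bound[of "\<bar>f x\<bar>" "\<bar>g x\<bar>"] by (simp add: mult.assoc)
    moreover have "0 \<le> \<bar>f x\<bar> * \<bar>g x\<bar>" by simp
    ultimately have "\<bar>f x\<bar> * \<bar>g x\<bar> \<le> (f x)\<^sup>2 + (g x)\<^sup>2" by linarith
    then show "norm (f x * g x) \<le> norm ((f x)\<^sup>2 + (g x)\<^sup>2)"
      by (simp add: abs_mult)
  qed
qed (use assms(1,2) in measurable)

lemma integrable_square_diff:
  fixes f g :: "'b \<Rightarrow> real"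
  assumes "f \<in> borel_measurable N" "g \<in> borel_measurable N"
    and "integrable N (\<lambda>x. (f x)\<^sup>2)" "integrable N (\<lambda>x. (g x)\<^sup>2)"
  shows "integrable N (\<lambda>x. (f x - g x)\<^sup>2)"
proof (rule Bochner_Integration.integrable_bound)
  show "integrable N (\<lambda>x. 2 * (f x)\<^sup>2 + 2 * (g x)\<^sup>2)"
    using assms(3,4) by simp
  show "AE x in N. norm ((f x - g x)\<^sup>2) \<le> norm (2 * (f x)\<^sup>2 + 2 * (g x)\<^sup>2)"
    using power2_diff_le by (intro AE_I2) simp
  show "(\<lambda>x. (f x - g x)\<^sup>2) \<in> borel_measurable N"
    using assms(1,2) by measurable
qed

lemma Cauchy_Schwarz_integral:
  fixes f g :: "'b \<Rightarrow> real"
  assumes [measurable]: "f \<in> borel_measurable N" "g \<in> borel_measurable N"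
    and f2: "integrable N (\<lambda>x. (f x)\<^sup>2)" and g2: "integrable N (\<lambda>x. (g x)\<^sup>2)"
  shows "(\<integral>x. f x * g x \<partial>N)\<^sup>2 \<le> (\<integral>x. (f x)\<^sup>2 \<partial>N) * (\<integral>x. (g x)\<^sup>2 \<partial>N)"
proof (rule quadratic_nonneg_imp_discriminant_le)
  fix t :: real
  have fg: "integrable N (\<lambda>x. f x * g x)"
    by (rule integrable_mult_of_square_integrable) (use f2 g2 in auto)
  have "(\<lambda>x. (f x + t * g x)\<^sup>2) = (\<lambda>x. (f x)\<^sup>2 + 2 * t * (f x * g x) + t\<^sup>2 * (g x)\<^sup>2)"
    by (auto simp: power2_eq_square algebra_simps)
  then have "(\<integral>x. (f x + t * g x)\<^sup>2 \<partial>N)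
      = (\<integral>x. (f x)\<^sup>2 \<partial>N) + 2 * t * (\<integral>x. f x * g x \<partial>N) + t\<^sup>2 * (\<integral>x. (g x)\<^sup>2 \<partial>N)"
    using f2 g2 fg by simp
  moreover have "0 \<le> (\<integral>x. (f x + t * g x)\<^sup>2 \<partial>N)" by simp
  ultimately show "0 \<le> (\<integral>x. (f x)\<^sup>2 \<partial>N) + 2 * t * (\<integral>x. f x * g x \<partial>N) + t\<^sup>2 * (\<integral>x. (g x)\<^sup>2 \<partial>N)"
    by simp
qed simp

lemma integrable_integral_le_of_nn_integral_le:
  fixes h :: "'b \<Rightarrow> real"
  assumes "h \<in> borel_measurable N" and "\<And>x. 0 \<le> h x" and "0 \<le> c"
    and "(\<integral>\<^sup>+x. ennreal (h x) \<partial>N) \<le> ennreal c"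
  shows "integrable N h" and "(\<integral>x. h x \<partial>N) \<le> c"
proof -
  have "(\<integral>\<^sup>+x. ennreal (norm (h x)) \<partial>N) = (\<integral>\<^sup>+x. ennreal (h x) \<partial>N)"
    using assms(2) by simp
  also have "\<dots> < \<infinity>"
    using assms(4) by (rule le_less_trans) simp
  finally show "integrable N h"
    using assms(1) by (simp add: integrable_iff_bounded)
  then have "ennreal (\<integral>x. h x \<partial>N) = (\<integral>\<^sup>+x. ennreal (h x) \<partial>N)"
    using assms(2) by (intro nn_integral_eq_integral[symmetric]) auto
  with assms(4) have "ennreal (\<integral>x. h x \<partial>N) \<le> ennreal c" by simp
  then show "(\<integral>x. h x \<partial>N) \<le> c"
    using assms(3) by (rule ennreal_le_iff[THEN iffD1, rotated])
qed

lemma nn_integral_le_liminf_of_AE_tendsto: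
  fixes f :: "nat \<Rightarrow> 'b \<Rightarrow> real"
  assumes "\<And>n. f n \<in> borel_measurable N" and "AE x in N. (\<lambda>n. f n x) \<longlonglongrightarrow> g x"
  shows "(\<integral>\<^sup>+x. ennreal (g x) \<partial>N) \<le> liminf (\<lambda>n. \<integral>\<^sup>+x. ennreal (f n x) \<partial>N)"
proof -
  have "(\<integral>\<^sup>+x. ennreal (g x) \<partial>N) = (\<integral>\<^sup>+x. liminf (\<lambda>n. ennreal (f n x)) \<partial>N)"
    using assms(2) by (intro nn_integral_cong_AE) (auto elim!: eventually_mono
        intro!: lim_imp_Liminf[symmetric] tendsto_ennrealI)
  also have "\<dots> \<le> liminf (\<lambda>n. \<integral>\<^sup>+x. ennreal (f n x) \<partial>N)"
    using assms(1) by (intro nn_integral_liminf) simp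
  finally show ?thesis .
qed

lemma Fatou_integral_le:
  fixes f :: "nat \<Rightarrow> 'b \<Rightarrow> real"
  assumes f: "\<And>n. integrable N (f n)" and g: "integrable N g" and f_nonneg: "\<And>n x. 0 \<le> f n x"
    and f_g: "AE x in N. (\<lambda>n. f n x) \<longlonglongrightarrow> g x"
    and lim: "(\<lambda>n. \<integral>x. f n x \<partial>N) \<longlonglongrightarrow> c"
  shows "(\<integral>x. g x \<partial>N) \<le> c"
proof -
  have g_nonneg: "AE x in N. 0 \<le> g x"
    using f_g by eventually_elim (rule LIMSEQ_le_const, auto simp: f_nonneg)
  have "0 \<le> c"
    using lim by (rule LIMSEQ_le_const) (auto intro: integral_nonneg_AE simp: f_nonneg)
  have "ennreal (\<integral>x. g x \<partial>N) = (\<integral>\<^sup>+x. ennreal (g x) \<partial>N)"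
    using g g_nonneg by (rule nn_integral_eq_integral[symmetric])
  also have "\<dots> \<le> liminf (\<lambda>n. \<integral>\<^sup>+x. ennreal (f n x) \<partial>N)"
    using f f_g by (intro nn_integral_le_liminf_of_AE_tendsto) auto
  also have "(\<lambda>n. \<integral>\<^sup>+x. ennreal (f n x) \<partial>N) = (\<lambda>n. ennreal (\<integral>x. f n x \<partial>N))"
    using f f_nonneg by (intro ext nn_integral_eq_integral) auto
  also have "liminf \<dots> = ennreal c"
    using lim by (intro lim_imp_Liminf tendsto_ennrealI) auto
  finally show ?thesis
    using \<open>0 \<le> c\<close> by (simp add: ennreal_le_iff)
qed

lemma nn_integral_square_dist_AE_limit_le:
  fixes f :: "nat \<Rightarrow> 'b \<Rightarrow> real"
  assumes "\<And>k. f k \<in> borel_measurable N" and "AE x in N. (\<lambda>k. f k x) \<longlonglongrightarrow> g x"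
    and "\<And>k. n \<le> k \<Longrightarrow> (\<integral>\<^sup>+x. ennreal ((f n x - f k x)\<^sup>2) \<partial>N) \<le> c"
  shows "(\<integral>\<^sup>+x. ennreal ((f n x - g x)\<^sup>2) \<partial>N) \<le> c"
proof -
  have "(\<integral>\<^sup>+x. ennreal ((f n x - g x)\<^sup>2) \<partial>N)
      \<le> liminf (\<lambda>k. \<integral>\<^sup>+x. ennreal ((f n x - f k x)\<^sup>2) \<partial>N)"
    using assms(1,2)
    by (intro nn_integral_le_liminf_of_AE_tendsto) (auto elim!: eventually_mono intro!: tendsto_intros)
  also have "\<dots> \<le> c"
    using assms(3) by (intro Liminf_le) (auto simp: eventually_sequentially)
  finally show ?thesis .
qed

lemma AE_convergent_of_fast_L2_increments:
  fixes g :: "nat \<Rightarrow> 'b \<Rightarrow> real"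
  assumes [measurable]: "\<And>j. g j \<in> borel_measurable N"
    and fast: "\<And>j. (\<integral>\<^sup>+x. ennreal ((g (Suc j) x - g j x)\<^sup>2) \<partial>N) \<le> ennreal ((1/8)^j)"
  shows "AE x in N. convergent (\<lambda>j. g j x)"
proof -
  define G where "G x = (\<Sum>j. ennreal (2^j * (g (Suc j) x - g j x)\<^sup>2))" for x
  have "(\<integral>\<^sup>+x. G x \<partial>N) = (\<Sum>j. \<integral>\<^sup>+x. ennreal (2^j * (g (Suc j) x - g j x)\<^sup>2) \<partial>N)"
    unfolding G_def by (rule nn_integral_suminf) measurable
  also have "\<dots> \<le> (\<Sum>j. ennreal ((1/4)^j))"
  proof (intro suminf_le allI)
    fix j
    have "(\<integral>\<^sup>+x. ennreal (2^j * (g (Suc j) x - g j x)\<^sup>2) \<partial>N)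
        = ennreal (2^j) * (\<integral>\<^sup>+x. ennreal ((g (Suc j) x - g j x)\<^sup>2) \<partial>N)"
      by (simp add: ennreal_mult nn_integral_cmult)
    also have "\<dots> \<le> ennreal (2^j) * ennreal ((1/8)^j)"
      using fast[of j] by (intro mult_left_mono) auto
    also have "\<dots> = ennreal ((1/4)^j)"
      by (simp add: ennreal_mult[symmetric] power_mult_distrib[symmetric])
    finally show "(\<integral>\<^sup>+x. ennreal (2^j * (g (Suc j) x - g j x)\<^sup>2) \<partial>N) \<le> ennreal ((1/4)^j)" .
  qed auto
  also have "\<dots> = ennreal (\<Sum>j. (1/4)^j)"
    by (rule suminf_ennreal2) (auto intro: summable_geometric)
  finally have "AE x in N. G x \<noteq> \<infinity>"
    by (intro nn_integral_PInf_AE) (auto simp: G_def top_unique)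
  then show ?thesis
  proof eventually_elim
    case (elim x)
    then have "summable (\<lambda>j. 2^j * (g (Suc j) x - g j x)\<^sup>2)"
      by (intro summable_suminf_not_top) (auto simp: G_def)
    then show ?case by (rule convergent_of_summable_weighted_square_increments)
  qed
qed

lemma L2_Cauchy_imp_AE_convergent_subseq:
  fixes f :: "nat \<Rightarrow> 'b \<Rightarrow> real"
  assumes [measurable]: "\<And>n. f n \<in> borel_measurable N"
    and square_integrable: "\<And>n. integrable N (\<lambda>x. (f n x)\<^sup>2)"
    and Cauchy: "\<And>e. 0 < e \<Longrightarrow> \<exists>n0. \<forall>n\<ge>n0. \<forall>k\<ge>n0. (\<integral>x. (f n x - f k x)\<^sup>2 \<partial>N) < e"
  shows "\<exists>r. strict_mono r \<and> (AE x in N. (\<lambda>n. f (r n) x) \<longlonglongrightarrow> lim (\<lambda>n. f (r n) x))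
           \<and> integrable N (\<lambda>x. (lim (\<lambda>n. f (r n) x))\<^sup>2)
           \<and> (\<lambda>n. \<integral>x. (f (r n) x - lim (\<lambda>n. f (r n) x))\<^sup>2 \<partial>N) \<longlonglongrightarrow> 0"
proof -
  obtain r where r: "strict_mono r"
    and fast: "\<And>j k. j \<le> k \<Longrightarrow> (\<integral>x. (f (r j) x - f (r k) x)\<^sup>2 \<partial>N) < (1/8)^j"
    using Cauchy_imp_fast_subseq[of "\<lambda>n k. \<integral>x. (f n x - f k x)\<^sup>2 \<partial>N" "\<lambda>j. (1/8)^j"] Cauchy
    by auto
  define v where "v x = lim (\<lambda>n. f (r n) x)" for x
  have nn_fast: "(\<integral>\<^sup>+x. ennreal ((f (r j) x - f (r k) x)\<^sup>2) \<partial>N) \<le> ennreal ((1/8)^j)"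
    if "j \<le> k" for j k
    using fast[OF that] integrable_square_diff[OF _ _ square_integrable square_integrable]
    by (subst nn_integral_eq_integral) (auto intro: ennreal_leI)
  have "AE x in N. convergent (\<lambda>n. f (r n) x)"
    by (rule AE_convergent_of_fast_L2_increments) (use nn_fast in \<open>auto simp: power2_commute\<close>)
  then have lim: "AE x in N. (\<lambda>n. f (r n) x) \<longlonglongrightarrow> v x"
    by eventually_elim (simp add: v_def convergent_LIMSEQ_iff)
  have [measurable]: "v \<in> borel_measurable N" unfolding v_def by measurable
  have "(\<integral>\<^sup>+x. ennreal ((f (r n) x - v x)\<^sup>2) \<partial>N) \<le> ennreal ((1/8)^n)" for n
    by (rule nn_integral_square_dist_AE_limit_le[where f = "\<lambda>k. f (r k)", OF _ lim nn_fast]) simp_all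
  then have dist_integrable: "integrable N (\<lambda>x. (f (r n) x - v x)\<^sup>2)"
    and dist_le: "(\<integral>x. (f (r n) x - v x)\<^sup>2 \<partial>N) \<le> (1/8)^n" for n
    using integrable_integral_le_of_nn_integral_le[of "\<lambda>x. (f (r n) x - v x)\<^sup>2" N "(1/8)^n"] by auto
  have "integrable N (\<lambda>x. (f (r 0) x - (f (r 0) x - v x))\<^sup>2)"
    using square_integrable dist_integrable by (rule integrable_square_diff[rotated 2]) auto
  moreover have "(\<lambda>n. \<integral>x. (f (r n) x - v x)\<^sup>2 \<partial>N) \<longlonglongrightarrow> 0"
  proof (rule real_tendsto_sandwich[of "\<lambda>n. 0" _ _ "\<lambda>n. (1/8)^n"])
    show "(\<lambda>n. (1/8::real)^n) \<longlonglongrightarrow> 0" by (rule LIMSEQ_power_zero) simp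
  qed (simp_all add: dist_le)
  ultimately have "strict_mono r \<and> (AE x in N. (\<lambda>n. f (r n) x) \<longlonglongrightarrow> v x)
      \<and> integrable N (\<lambda>x. (v x)\<^sup>2) \<and> (\<lambda>n. \<integral>x. (f (r n) x - v x)\<^sup>2 \<partial>N) \<longlonglongrightarrow> 0"
    using r lim by simp
  then show ?thesis unfolding v_def by blast
qed

section \<open>Minimising sequences of a convex functional\<close>

lemma Cauchy_of_near_minimal_norms:
  fixes N :: "'v \<Rightarrow> real" and d :: "'v \<Rightarrow> 'v \<Rightarrow> real" and mid :: "'v \<Rightarrow> 'v \<Rightarrow> 'v"
  assumes S_ne: "\<And>n. S n \<noteq> {}" and S_antimono: "\<And>n k. n \<le> k \<Longrightarrow> S k \<subseteq> S n"
    and mid_mem: "\<And>n v w. v \<in> S n \<Longrightarrow> w \<in> S n \<Longrightarrow> mid v w \<in> S n"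
    and parallelogram: "\<And>n v w. v \<in> S n \<Longrightarrow> w \<in> S n \<Longrightarrow> d v w = 2 * N v + 2 * N w - 4 * N (mid v w)"
    and N_bounded: "\<And>n v. v \<in> S n \<Longrightarrow> 0 \<le> N v \<and> N v \<le> B"
    and u_S: "\<And>n. u n \<in> S n" and u_N: "\<And>n. N (u n) < Inf (N ` S n) + \<delta> n"
    and \<delta>_antimono: "\<And>n k. n \<le> k \<Longrightarrow> \<delta> k \<le> \<delta> n" and \<delta>_tendsto: "\<delta> \<longlonglongrightarrow> 0"
  shows "\<forall>e>0. \<exists>n0. \<forall>n\<ge>n0. \<forall>k\<ge>n0. d (u n) (u k) < e"
proof -
  define \<rho> where "\<rho> n = Inf (N ` S n)" for n
  have \<rho>_le: "\<rho> n \<le> N v" if "v \<in> S n" for v n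
    unfolding \<rho>_def using that N_bounded by (intro cInf_lower bdd_belowI2) auto
  have "incseq \<rho>"
  proof (intro incseq_def[THEN iffD2] allI impI)
    fix n k :: nat assume "n \<le> k"
    have "bdd_below (N ` S n)" using N_bounded by (intro bdd_belowI2) auto
    with S_ne[of k] image_mono[OF S_antimono[OF \<open>n \<le> k\<close>], of N] show "\<rho> n \<le> \<rho> k"
      unfolding \<rho>_def by (intro cInf_superset_mono) auto
  qed
  moreover have "\<rho> n \<le> B" for n
    using S_ne[of n] \<rho>_le N_bounded by (meson all_not_in_conv order.trans)
  ultimately obtain \<rho>_sup where \<rho>_tendsto: "\<rho> \<longlonglongrightarrow> \<rho>_sup" and \<rho>_le_sup: "\<And>n. \<rho> n \<le> \<rho>_sup"
    using incseq_convergent by blast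
  define C where "C n = 2 * (\<rho>_sup - \<rho> n) + 4 * \<delta> n" for n
  have d_le: "d v w \<le> C n" if "n \<le> k" "{v, w} = {u n, u k}" for v w n k
  proof -
    have v: "v \<in> S n" and w: "w \<in> S n"
      using that u_S S_antimono[OF \<open>n \<le> k\<close>] by (auto simp: doubleton_eq_iff)
    then have "\<rho> n \<le> N (mid v w)" by (intro \<rho>_le mid_mem)
    moreover have "N v + N w < \<rho> n + \<rho>_sup + 2 * \<delta> n"
      using that u_N[of n] u_N[of k] \<rho>_le_sup[of k] \<delta>_antimono[OF \<open>n \<le> k\<close>]
      by (auto simp: doubleton_eq_iff \<rho>_def)
    ultimately show ?thesis
      using parallelogram[OF v w] by (simp add: C_def)
  qed
  have d_le_min: "d (u n) (u k) \<le> C (min n k)" for n k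
  proof (cases "n \<le> k")
    case True
    then show ?thesis using d_le[of n k "u n" "u k"] by simp
  next
    case False
    then show ?thesis using d_le[of k n "u n" "u k"] by (simp add: insert_commute)
  qed
  have "C \<longlonglongrightarrow> 2 * (\<rho>_sup - \<rho>_sup) + 4 * 0"
    unfolding C_def[abs_def] by (intro tendsto_intros \<rho>_tendsto \<delta>_tendsto)
  then have C_tendsto: "C \<longlonglongrightarrow> 0" by simp
  show ?thesis
  proof (intro allI impI)
    fix e :: real assume "0 < e"
    then obtain n0 where "\<And>n. n0 \<le> n \<Longrightarrow> C n < e"
      using order_tendstoD(2)[OF C_tendsto] by (auto simp: eventually_sequentially)
    then show "\<exists>n0. \<forall>n\<ge>n0. \<forall>k\<ge>n0. d (u n) (u k) < e"
      by (meson d_le_min le_less_trans min.boundedI)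
  qed
qed

lemma exists_Cauchy_minimising_sequence:
  fixes J N :: "'v \<Rightarrow> real" and d :: "'v \<Rightarrow> 'v \<Rightarrow> real" and mid :: "'v \<Rightarrow> 'v \<Rightarrow> 'v"
  assumes "H \<noteq> {}" and "0 < a"
    and mid_mem: "\<And>v w. v \<in> H \<Longrightarrow> w \<in> H \<Longrightarrow> mid v w \<in> H"
    and J_mid: "\<And>v w. v \<in> H \<Longrightarrow> w \<in> H \<Longrightarrow> J (mid v w) \<le> (J v + J w) / 2"
    and parallelogram: "\<And>v w. v \<in> H \<Longrightarrow> w \<in> H \<Longrightarrow> d v w = 2 * N v + 2 * N w - 4 * N (mid v w)"
    and N_nonneg: "\<And>v. v \<in> H \<Longrightarrow> 0 \<le> N v"
    and coercive: "\<And>v. v \<in> H \<Longrightarrow> a * N v - K \<le> J v"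
  shows "\<exists>u. (\<forall>n. u n \<in> H) \<and> (\<lambda>n. J (u n)) \<longlonglongrightarrow> Inf (J ` H)
           \<and> (\<forall>e>0. \<exists>n0. \<forall>n\<ge>n0. \<forall>k\<ge>n0. d (u n) (u k) < e)"
proof -
  define m where "m = Inf (J ` H)"
  have "- K \<le> J v" if "v \<in> H" for v
    using coercive[OF that] N_nonneg[OF that] \<open>0 < a\<close> by (smt (verit) mult_nonneg_nonneg)
  then have m_le: "m \<le> J v" if "v \<in> H" for v
    unfolding m_def using that by (intro cInf_lower bdd_belowI2) auto
  define \<delta> :: "nat \<Rightarrow> real" where "\<delta> n = 1 / Suc n" for n
  have \<delta>_pos: "0 < \<delta> n" and \<delta>_le_1: "\<delta> n \<le> 1" for n by (simp_all add: \<delta>_def)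
  have \<delta>_antimono: "\<delta> k \<le> \<delta> n" if "n \<le> k" for n k
    using that by (simp add: \<delta>_def frac_le)
  have \<delta>_tendsto: "\<delta> \<longlonglongrightarrow> 0"
    unfolding \<delta>_def using LIMSEQ_Suc[OF lim_inverse_n'] by (simp add: inverse_eq_divide)
  define S where "S n = {v \<in> H. J v \<le> m + \<delta> n}" for n
  have S_ne: "S n \<noteq> {}" for n
  proof -
    have "Inf (J ` H) < m + \<delta> n" using \<delta>_pos[of n] by (simp add: m_def)
    then obtain v where "v \<in> H" "J v < m + \<delta> n" using cInf_lessD[of "J ` H"] \<open>H \<noteq> {}\<close> by blast
    then show ?thesis by (auto simp: S_def)
  qed
  have "\<exists>v. v \<in> S n \<and> N v < Inf (N ` S n) + \<delta> n" for n
    using cInf_lessD[of "N ` S n" "Inf (N ` S n) + \<delta> n"] S_ne[of n] \<delta>_pos[of n] by auto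
  then obtain u where u_S: "\<And>n. u n \<in> S n" and u_N: "\<And>n. N (u n) < Inf (N ` S n) + \<delta> n"
    by metis
  have "\<forall>e>0. \<exists>n0. \<forall>n\<ge>n0. \<forall>k\<ge>n0. d (u n) (u k) < e"
  proof (rule Cauchy_of_near_minimal_norms[where mid = mid and d = d,
        OF S_ne _ _ _ _ u_S u_N \<delta>_antimono \<delta>_tendsto])
    show "S k \<subseteq> S n" if "n \<le> k" for n k
      using \<delta>_antimono[OF that] by (auto simp: S_def)
    show "mid v w \<in> S n" if "v \<in> S n" "w \<in> S n" for n v w
      using that J_mid[of v w] mid_mem[of v w] by (auto simp: S_def)
    show "0 \<le> N v \<and> N v \<le> (m + 1 + K) / a" if "v \<in> S n" for n v
      using coercive[of v] N_nonneg[of v] that \<delta>_le_1[of n] \<open>0 < a\<close>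
      by (auto simp: S_def pos_le_divide_eq mult.commute)
    show "d v w = 2 * N v + 2 * N w - 4 * N (mid v w)" if "v \<in> S n" "w \<in> S n" for n v w
      using that by (intro parallelogram) (simp_all add: S_def)
  qed
  moreover have "(\<lambda>n. J (u n)) \<longlonglongrightarrow> m"
  proof (rule real_tendsto_sandwich[of "\<lambda>n. m" _ _ "\<lambda>n. m + \<delta> n"])
    show "(\<lambda>n. m + \<delta> n) \<longlonglongrightarrow> m" using tendsto_add[OF tendsto_const \<delta>_tendsto, of m] by simp
  qed (use u_S m_le in \<open>auto simp: S_def\<close>)
  ultimately show ?thesis
    using u_S unfolding m_def S_def by blast
qed

section \<open>The control problem without state dependence\<close>

locale control_problem =
  fixes M :: "'a measure" and F :: "real \<Rightarrow> 'a measure" and T :: real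
    and l \<Psi> :: "real \<Rightarrow> real" and \<pi> :: "real \<Rightarrow> 'a \<Rightarrow> real" and x0 :: real
    and \<alpha> \<beta> b K :: real
  assumes prob_space_M: "prob_space M" and T_pos: "0 < T"
    and l_nonneg: "\<And>v. 0 \<le> l v" and l_convex: "convex_on UNIV l"
    and l_upper: "\<And>v. l v \<le> b * (1 + v\<^sup>2)"
    and l_coercive: "\<And>v. \<alpha> * v\<^sup>2 - \<beta> \<le> l v" and \<alpha>_pos: "0 < \<alpha>"
    and \<Psi>_nonneg: "\<And>x. 0 \<le> \<Psi> x" and \<Psi>_convex: "convex_on UNIV \<Psi>"
    and \<Psi>_upper: "\<And>x. \<Psi> x \<le> K * (1 + x\<^sup>2)"
    and price: "HF M F T \<pi>"
begin

abbreviation D where "D \<equiv> restrict_space lborel {0..T}"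
abbreviation P where "P \<equiv> time_space T M"

sublocale M: prob_space M by (rule prob_space_M)

lemma emeasure_D: "emeasure D {0..T} = ennreal T"
  using T_pos by (simp add: emeasure_restrict_space)

lemma finite_measure_D: "finite_measure D"
  by (rule finite_measureI) (simp add: space_restrict_space emeasure_D)

sublocale DM: pair_sigma_finite D M
proof -
  interpret D: finite_measure D by (rule finite_measure_D)
  show "pair_sigma_finite D M" by unfold_locales
qed

lemma P_eq: "P = D \<Otimes>\<^sub>M M" by (simp add: time_space_def)

lemma emeasure_P_space: "emeasure P (space P) = ennreal T"
proof -
  have "emeasure (D \<Otimes>\<^sub>M M) (space D \<times> space M) = emeasure D (space D) * emeasure M (space M)"
    by (rule M.emeasure_pair_measure_Times) (rule sets.top)+
  then show ?thesis
    by (simp add: P_eq space_pair_measure space_restrict_space emeasure_D M.emeasure_space_1)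
qed

sublocale P: finite_measure P
  by (intro finite_measureI) (simp add: emeasure_P_space)

lemma measure_P_space: "measure P (space P) = T"
  unfolding measure_def emeasure_P_space using T_pos by simp

lemma HF_iff: "HF M F T v \<longleftrightarrow>
    (\<lambda>(t, \<omega>). v t \<omega>) \<in> borel_measurable P \<and> (\<forall>t\<in>{0..T}. v t \<in> borel_measurable (F t))
    \<and> integrable P (\<lambda>(t, \<omega>). (v t \<omega>)\<^sup>2)"
proof -
  have "(\<lambda>(t, \<omega>). (v t \<omega>)\<^sup>2) \<in> borel_measurable P" if "(\<lambda>(t, \<omega>). v t \<omega>) \<in> borel_measurable P"
    using borel_measurable_power[OF that, of 2] by (simp add: split_beta')
  then show ?thesis
    unfolding HF_def integrable_iff_bounded by (auto simp: split_beta')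
qed

lemma HF_measurable: "HF M F T v \<Longrightarrow> (\<lambda>(t, \<omega>). v t \<omega>) \<in> borel_measurable P"
  by (simp add: HF_iff)

lemma HF_square_integrable: "HF M F T v \<Longrightarrow> integrable P (\<lambda>(t, \<omega>). (v t \<omega>)\<^sup>2)"
  by (simp add: HF_iff)

lemma HF_integrable: "HF M F T v \<Longrightarrow> integrable P (\<lambda>(t, \<omega>). v t \<omega>)"
  using P.square_integrable_imp_integrable[OF HF_measurable, of v] HF_square_integrable[of v]
  by (simp add: split_beta')

lemma HF_integrable_mult:
  assumes "HF M F T v" and "HF M F T w"
  shows "integrable P (\<lambda>(t, \<omega>). v t \<omega> * w t \<omega>)"
proof -
  have "integrable P (\<lambda>p. (\<lambda>(t, \<omega>). v t \<omega>) p * (\<lambda>(t, \<omega>). w t \<omega>) p)"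
    using assms HF_square_integrable
    by (intro integrable_mult_of_square_integrable HF_measurable) (simp_all add: split_beta')
  then show ?thesis by (simp add: split_beta')
qed

lemma HF_lincomb:
  assumes v: "HF M F T v" and w: "HF M F T w"
  shows "HF M F T (\<lambda>t \<omega>. c * v t \<omega> + d * w t \<omega>)"
proof -
  have [measurable]: "(\<lambda>p. v (fst p) (snd p)) \<in> borel_measurable P"
    "(\<lambda>p. w (fst p) (snd p)) \<in> borel_measurable P"
    using HF_measurable[OF v] HF_measurable[OF w] by (simp_all add: split_beta')
  have "(\<lambda>(t, \<omega>). c * v t \<omega> + d * w t \<omega>) \<in> borel_measurable P" by measurable
  moreover have "(\<lambda>\<omega>. c * v t \<omega> + d * w t \<omega>) \<in> borel_measurable (F t)" if "t \<in> {0..T}" for t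
  proof -
    from v w that have [measurable]: "v t \<in> borel_measurable (F t)" "w t \<in> borel_measurable (F t)"
      by (simp_all add: HF_iff)
    show ?thesis by measurable
  qed
  moreover have "integrable P (\<lambda>(t, \<omega>). (c * v t \<omega> + d * w t \<omega>)\<^sup>2)"
  proof (rule Bochner_Integration.integrable_bound)
    show "integrable P (\<lambda>(t, \<omega>). 2 * c\<^sup>2 * (v t \<omega>)\<^sup>2 + 2 * d\<^sup>2 * (w t \<omega>)\<^sup>2)"
      using HF_square_integrable[OF v] HF_square_integrable[OF w] by (simp add: split_beta')
    show "AE p in P. norm ((\<lambda>(t, \<omega>). (c * v t \<omega> + d * w t \<omega>)\<^sup>2) p)
        \<le> norm ((\<lambda>(t, \<omega>). 2 * c\<^sup>2 * (v t \<omega>)\<^sup>2 + 2 * d\<^sup>2 * (w t \<omega>)\<^sup>2) p)"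
      using power2_diff_le[of "c * v t \<omega>" "- d * w t \<omega>" for t \<omega>]
      by (intro AE_I2) (simp add: split_beta' power_mult_distrib mult.assoc)
  qed measurable
  ultimately show ?thesis by (simp add: HF_iff)
qed

lemma HF_midpoint: "HF M F T v \<Longrightarrow> HF M F T w \<Longrightarrow> HF M F T (\<lambda>t \<omega>. (v t \<omega> + w t \<omega>) / 2)"
  using HF_lincomb[of v w "1/2" "1/2"] by (simp add: add_divide_distrib)

lemma HF_diff: "HF M F T v \<Longrightarrow> HF M F T w \<Longrightarrow> HF M F T (\<lambda>t \<omega>. v t \<omega> - w t \<omega>)"
  using HF_lincomb[of v w 1 "-1"] by simp

lemma HF_zero: "HF M F T (\<lambda>t \<omega>. 0)"
  by (simp add: HF_iff split_beta')

lemma integrable_time_integral: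
  fixes f :: "real \<Rightarrow> 'a \<Rightarrow> real"
  assumes "integrable P (\<lambda>(t, \<omega>). f t \<omega>)"
  shows "integrable M (\<lambda>\<omega>. \<integral>t. f t \<omega> \<partial>D)"
  using assms unfolding P_eq by (rule DM.integrable_snd)

lemma integral_time_integral:
  fixes f :: "real \<Rightarrow> 'a \<Rightarrow> real"
  assumes "integrable P (\<lambda>(t, \<omega>). f t \<omega>)"
  shows "(\<integral>\<omega>. (\<integral>t. f t \<omega> \<partial>D) \<partial>M) = (\<integral>(t, \<omega>). f t \<omega> \<partial>P)"
  using assms unfolding P_eq by (rule DM.integral_snd)

lemma AE_integrable_path:
  assumes "HF M F T v"
  shows "AE \<omega> in M. integrable D (\<lambda>t. v t \<omega>) \<and> integrable D (\<lambda>t. (v t \<omega>)\<^sup>2)"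
proof -
  have "AE \<omega> in M. integrable D (\<lambda>t. v t \<omega>)"
    using HF_integrable[OF assms] unfolding P_eq by (rule DM.AE_integrable_snd)
  moreover have "AE \<omega> in M. integrable D (\<lambda>t. (v t \<omega>)\<^sup>2)"
    using HF_square_integrable[OF assms] unfolding P_eq by (rule DM.AE_integrable_snd)
  ultimately show ?thesis by eventually_elim simp
qed

lemma state_T_eq: "state x0 v T \<omega> = x0 + (\<integral>t. v t \<omega> \<partial>D)"
  unfolding state_def set_lebesgue_integral_def
  by (subst integral_restrict_space) (auto simp: mult.commute)

lemma state_measurable: "HF M F T v \<Longrightarrow> state x0 v T \<in> borel_measurable M"
  using integrable_time_integral[OF HF_integrable] unfolding state_T_eq[abs_def] by simp

lemma AE_state_midpoint:
  assumes "HF M F T v" and "HF M F T w"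
  shows "AE \<omega> in M. state x0 (\<lambda>t \<omega>. (v t \<omega> + w t \<omega>) / 2) T \<omega>
    = (state x0 v T \<omega> + state x0 w T \<omega>) / 2"
  using AE_integrable_path[OF assms(1)] AE_integrable_path[OF assms(2)]
  by eventually_elim (simp add: state_T_eq field_simps)

lemma AE_state_diff:
  assumes "HF M F T v" and "HF M F T w"
  shows "AE \<omega> in M. state x0 v T \<omega> - state x0 w T \<omega> = (\<integral>t. v t \<omega> - w t \<omega> \<partial>D)"
  using AE_integrable_path[OF assms(1)] AE_integrable_path[OF assms(2)]
  by eventually_elim (simp add: state_T_eq)

lemma AE_state_square_le:
  assumes "HF M F T v"
  shows "AE \<omega> in M. (state x0 v T \<omega> - x0)\<^sup>2 \<le> T * (\<integral>t. (v t \<omega>)\<^sup>2 \<partial>D)"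
  using AE_integrable_path[OF assms] AE_space
proof eventually_elim
  case (elim \<omega>)
  interpret D: finite_measure D by (rule finite_measure_D)
  have "(\<lambda>t. v t \<omega>) \<in> borel_measurable D"
    using elim by (auto dest: borel_measurable_integrable)
  then have "(\<integral>t. 1 * v t \<omega> \<partial>D)\<^sup>2 \<le> (\<integral>t. 1\<^sup>2 \<partial>D) * (\<integral>t. (v t \<omega>)\<^sup>2 \<partial>D)"
    using elim by (intro Cauchy_Schwarz_integral) auto
  moreover have "(\<integral>t. 1\<^sup>2 \<partial>D) = T"
    using T_pos by (simp add: measure_def space_restrict_space emeasure_D)
  ultimately show ?case by (simp add: state_T_eq)
qed

lemma continuous_l: "continuous_on UNIV l"
  by (rule convex_on_continuous[OF open_UNIV l_convex])

lemma continuous_\<Psi>: "continuous_on UNIV \<Psi>"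
  by (rule convex_on_continuous[OF open_UNIV \<Psi>_convex])

lemma isCont_l: "isCont l x"
  using continuous_l by (simp add: continuous_on_eq_continuous_at)

lemma isCont_\<Psi>: "isCont \<Psi> x"
  using continuous_\<Psi> by (simp add: continuous_on_eq_continuous_at)

lemma integrable_running_cost:
  assumes "HF M F T v"
  shows "integrable P (\<lambda>(t, \<omega>). l (v t \<omega>))"
proof (rule Bochner_Integration.integrable_bound)
  show "integrable P (\<lambda>(t, \<omega>). b * (1 + (v t \<omega>)\<^sup>2))"
    using HF_square_integrable[OF assms] by (simp add: split_beta' distrib_left)
  show "AE p in P. norm ((\<lambda>(t, \<omega>). l (v t \<omega>)) p) \<le> norm ((\<lambda>(t, \<omega>). b * (1 + (v t \<omega>)\<^sup>2)) p)"
    using l_nonneg by (intro AE_I2) (auto simp: split_beta' intro: order_trans[OF l_upper abs_ge_self])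
  show "(\<lambda>(t, \<omega>). l (v t \<omega>)) \<in> borel_measurable P"
    using borel_measurable_continuous_onI[OF continuous_l] HF_measurable[OF assms]
    by (simp add: split_beta' measurable_compose)
qed

lemma integrable_price_term: "HF M F T v \<Longrightarrow> integrable P (\<lambda>(t, \<omega>). \<pi> t \<omega> * v t \<omega>)"
  by (rule HF_integrable_mult[OF price])

lemma integrable_terminal_cost:
  assumes v: "HF M F T v"
  shows "integrable M (\<lambda>\<omega>. \<Psi> (state x0 v T \<omega>))"
proof (rule Bochner_Integration.integrable_bound)
  have "0 \<le> K" using \<Psi>_upper[of 0] \<Psi>_nonneg[of 0] by simp
  show "integrable M (\<lambda>\<omega>. K * (1 + 2 * x0\<^sup>2) + 2 * K * T * (\<integral>t. (v t \<omega>)\<^sup>2 \<partial>D))"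
    using integrable_time_integral[OF HF_square_integrable[OF v]] by simp
  show "AE \<omega> in M. norm (\<Psi> (state x0 v T \<omega>))
      \<le> norm (K * (1 + 2 * x0\<^sup>2) + 2 * K * T * (\<integral>t. (v t \<omega>)\<^sup>2 \<partial>D))"
    using AE_state_square_le[OF v]
  proof eventually_elim
    case (elim \<omega>)
    have "(state x0 v T \<omega>)\<^sup>2 \<le> 2 * x0\<^sup>2 + 2 * (T * (\<integral>t. (v t \<omega>)\<^sup>2 \<partial>D))"
      using power2_diff_le[of "state x0 v T \<omega> - x0" "- x0"] elim by simp
    then have "\<Psi> (state x0 v T \<omega>) \<le> K * (1 + 2 * x0\<^sup>2) + 2 * K * T * (\<integral>t. (v t \<omega>)\<^sup>2 \<partial>D)"
      using \<Psi>_upper[of "state x0 v T \<omega>"] mult_left_mono[OF _ \<open>0 \<le> K\<close>] by (fastforce simp: algebra_simps)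
    then show ?case using \<Psi>_nonneg[of "state x0 v T \<omega>"] by simp
  qed
  show "(\<lambda>\<omega>. \<Psi> (state x0 v T \<omega>)) \<in> borel_measurable M"
    using borel_measurable_continuous_onI[OF continuous_\<Psi>] state_measurable[OF v]
    by (rule measurable_compose[rotated])
qed

definition sq_norm :: "(real \<Rightarrow> 'a \<Rightarrow> real) \<Rightarrow> real" where
  "sq_norm v = (\<integral>(t, \<omega>). (v t \<omega>)\<^sup>2 \<partial>P)"

definition J :: "(real \<Rightarrow> 'a \<Rightarrow> real) \<Rightarrow> real" where
  "J v = (\<integral>(t, \<omega>). l (v t \<omega>) \<partial>P) + (\<integral>(t, \<omega>). \<pi> t \<omega> * v t \<omega> \<partial>P)
     + (\<integral>\<omega>. \<Psi> (state x0 v T \<omega>) \<partial>M)"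

lemma cost_eq_J:
  assumes L: "\<And>x v. L x v = l v" and v: "HF M F T v"
  shows "cost M T L \<Psi> \<pi> x0 v = J v"
proof -
  have running: "integrable P (\<lambda>(t, \<omega>). l (v t \<omega>) + \<pi> t \<omega> * v t \<omega>)"
    using integrable_running_cost[OF v] integrable_price_term[OF v] by (simp add: split_beta')
  have "cost M T L \<Psi> \<pi> x0 v
      = (\<integral>\<omega>. (\<integral>t. l (v t \<omega>) + \<pi> t \<omega> * v t \<omega> \<partial>D) + \<Psi> (state x0 v T \<omega>) \<partial>M)"
    unfolding cost_def L set_lebesgue_integral_def
    by (subst integral_restrict_space) (auto simp: mult.commute)
  also have "\<dots> = (\<integral>\<omega>. (\<integral>t. l (v t \<omega>) + \<pi> t \<omega> * v t \<omega> \<partial>D) \<partial>M) + (\<integral>\<omega>. \<Psi> (state x0 v T \<omega>) \<partial>M)"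
    using integrable_time_integral[OF running] integrable_terminal_cost[OF v]
    by (rule Bochner_Integration.integral_add)
  also have "(\<integral>\<omega>. (\<integral>t. l (v t \<omega>) + \<pi> t \<omega> * v t \<omega> \<partial>D) \<partial>M)
      = (\<integral>(t, \<omega>). l (v t \<omega>) \<partial>P) + (\<integral>(t, \<omega>). \<pi> t \<omega> * v t \<omega> \<partial>P)"
    using integral_time_integral[OF running] integrable_running_cost[OF v] integrable_price_term[OF v]
    by (simp add: split_beta')
  finally show ?thesis unfolding J_def .
qed

lemma sq_norm_nonneg: "0 \<le> sq_norm v"
  unfolding sq_norm_def by (rule integral_nonneg_AE) (simp add: split_beta')

lemma sq_norm_parallelogram:
  assumes "HF M F T v" and "HF M F T w"
  shows "sq_norm (\<lambda>t \<omega>. v t \<omega> - w t \<omega>)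
    = 2 * sq_norm v + 2 * sq_norm w - 4 * sq_norm (\<lambda>t \<omega>. (v t \<omega> + w t \<omega>) / 2)"
proof -
  have "(\<lambda>(t, \<omega>). (v t \<omega> - w t \<omega>)\<^sup>2)
      = (\<lambda>(t, \<omega>). 2 * (v t \<omega>)\<^sup>2 + 2 * (w t \<omega>)\<^sup>2 - 4 * ((v t \<omega> + w t \<omega>) / 2)\<^sup>2)"
    by (auto simp: power2_eq_square field_simps)
  then show ?thesis
    using HF_square_integrable[OF assms(1)] HF_square_integrable[OF assms(2)]
      HF_square_integrable[OF HF_midpoint[OF assms]]
    unfolding sq_norm_def by (simp add: split_beta')
qed

lemma J_midpoint_le:
  assumes v: "HF M F T v" and w: "HF M F T w"
    and l_midpoint: "\<And>x y. l ((x + y) / 2) + \<kappa> * (x - y)\<^sup>2 \<le> (l x + l y) / 2"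
  shows "J (\<lambda>t \<omega>. (v t \<omega> + w t \<omega>) / 2) + \<kappa> * sq_norm (\<lambda>t \<omega>. v t \<omega> - w t \<omega>) \<le> (J v + J w) / 2"
proof -
  have mid: "HF M F T (\<lambda>t \<omega>. (v t \<omega> + w t \<omega>) / 2)" by (rule HF_midpoint[OF v w])
  note integrable =
    integrable_running_cost[OF v] integrable_running_cost[OF w] integrable_running_cost[OF mid]
    integrable_price_term[OF v] integrable_price_term[OF w]
    HF_square_integrable[OF HF_diff[OF v w]]
    integrable_terminal_cost[OF v] integrable_terminal_cost[OF w] integrable_terminal_cost[OF mid]
  have running: "(\<integral>(t, \<omega>). l ((v t \<omega> + w t \<omega>) / 2) \<partial>P) + \<kappa> * sq_norm (\<lambda>t \<omega>. v t \<omega> - w t \<omega>)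
      \<le> ((\<integral>(t, \<omega>). l (v t \<omega>) \<partial>P) + (\<integral>(t, \<omega>). l (w t \<omega>) \<partial>P)) / 2"
  proof -
    have "(\<integral>(t, \<omega>). l ((v t \<omega> + w t \<omega>) / 2) + \<kappa> * (v t \<omega> - w t \<omega>)\<^sup>2 \<partial>P)
        \<le> (\<integral>(t, \<omega>). (l (v t \<omega>) + l (w t \<omega>)) / 2 \<partial>P)"
      using integrable l_midpoint by (intro integral_mono) (auto simp: split_beta')
    then show ?thesis using integrable unfolding sq_norm_def by (simp add: split_beta')
  qed
  have price: "(\<integral>(t, \<omega>). \<pi> t \<omega> * ((v t \<omega> + w t \<omega>) / 2) \<partial>P)
      = ((\<integral>(t, \<omega>). \<pi> t \<omega> * v t \<omega> \<partial>P) + (\<integral>(t, \<omega>). \<pi> t \<omega> * w t \<omega> \<partial>P)) / 2"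
    using integrable by (simp add: split_beta' distrib_left add_divide_distrib)
  have "(\<integral>\<omega>. \<Psi> (state x0 (\<lambda>t \<omega>. (v t \<omega> + w t \<omega>) / 2) T \<omega>) \<partial>M)
      \<le> (\<integral>\<omega>. (\<Psi> (state x0 v T \<omega>) + \<Psi> (state x0 w T \<omega>)) / 2 \<partial>M)"
  proof (intro integral_mono_AE)
    show "AE \<omega> in M. \<Psi> (state x0 (\<lambda>t \<omega>. (v t \<omega> + w t \<omega>) / 2) T \<omega>)
        \<le> (\<Psi> (state x0 v T \<omega>) + \<Psi> (state x0 w T \<omega>)) / 2"
      using AE_state_midpoint[OF v w]
      by eventually_elim (simp only: convex_on_midpoint[OF \<Psi>_convex])
  qed (use integrable in simp_all)
  then have terminal: "(\<integral>\<omega>. \<Psi> (state x0 (\<lambda>t \<omega>. (v t \<omega> + w t \<omega>) / 2) T \<omega>) \<partial>M)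
      \<le> ((\<integral>\<omega>. \<Psi> (state x0 v T \<omega>) \<partial>M) + (\<integral>\<omega>. \<Psi> (state x0 w T \<omega>) \<partial>M)) / 2"
    using integrable by simp
  show ?thesis using running price terminal unfolding J_def by argo
qed

lemma J_coercive:
  assumes v: "HF M F T v"
  shows "\<alpha> / 2 * sq_norm v - (\<beta> * T + sq_norm \<pi> / (2 * \<alpha>)) \<le> J v"
proof -
  have pointwise: "\<alpha> / 2 * x\<^sup>2 - \<beta> - y\<^sup>2 / (2 * \<alpha>) \<le> l x + y * x" for x y
  proof -
    have "(\<alpha> * x + y)\<^sup>2 / (2 * \<alpha>) = \<alpha> / 2 * x\<^sup>2 + y * x + y\<^sup>2 / (2 * \<alpha>)"
      using \<alpha>_pos by (simp add: field_simps power2_eq_square)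
    moreover have "0 \<le> (\<alpha> * x + y)\<^sup>2 / (2 * \<alpha>)" using \<alpha>_pos by simp
    moreover have "0 \<le> \<alpha> / 2 * x\<^sup>2" using \<alpha>_pos by simp
    ultimately show ?thesis using l_coercive[of x] by linarith
  qed
  note integrable = HF_square_integrable[OF v] HF_square_integrable[OF price]
    integrable_running_cost[OF v] integrable_price_term[OF v]
  have "\<alpha> / 2 * sq_norm v - (\<beta> * T + sq_norm \<pi> / (2 * \<alpha>))
      = (\<integral>(t, \<omega>). \<alpha> / 2 * (v t \<omega>)\<^sup>2 - \<beta> - (\<pi> t \<omega>)\<^sup>2 / (2 * \<alpha>) \<partial>P)"
    using integrable by (simp add: sq_norm_def split_beta' measure_P_space)
  also have "\<dots> \<le> (\<integral>(t, \<omega>). l (v t \<omega>) + \<pi> t \<omega> * v t \<omega> \<partial>P)"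
    using integrable pointwise by (intro integral_mono) (auto simp: split_beta')
  also have "\<dots> \<le> J v"
    using integrable integral_nonneg_AE[of "\<lambda>\<omega>. \<Psi> (state x0 v T \<omega>)" M] \<Psi>_nonneg
    by (simp add: J_def split_beta')
  finally show ?thesis .
qed

lemma price_term_tendsto:
  assumes w: "\<And>n. HF M F T (w n)" and v: "HF M F T v"
    and L2: "(\<lambda>n. sq_norm (\<lambda>t \<omega>. w n t \<omega> - v t \<omega>)) \<longlonglongrightarrow> 0"
  shows "(\<lambda>n. \<integral>(t, \<omega>). \<pi> t \<omega> * w n t \<omega> \<partial>P) \<longlonglongrightarrow> (\<integral>(t, \<omega>). \<pi> t \<omega> * v t \<omega> \<partial>P)"
proof -
  have "(\<lambda>n. (\<integral>(t, \<omega>). \<pi> t \<omega> * w n t \<omega> \<partial>P) - (\<integral>(t, \<omega>). \<pi> t \<omega> * v t \<omega> \<partial>P)) \<longlonglongrightarrow> 0"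
  proof (rule tendsto_zero_of_square_le)
    fix n
    have d: "HF M F T (\<lambda>t \<omega>. w n t \<omega> - v t \<omega>)" by (rule HF_diff[OF w v])
    have "(\<integral>(t, \<omega>). \<pi> t \<omega> * w n t \<omega> \<partial>P) - (\<integral>(t, \<omega>). \<pi> t \<omega> * v t \<omega> \<partial>P)
        = (\<integral>p. (\<lambda>(t, \<omega>). \<pi> t \<omega>) p * (\<lambda>(t, \<omega>). w n t \<omega> - v t \<omega>) p \<partial>P)"
      using integrable_price_term[OF w] integrable_price_term[OF v]
      by (simp add: split_beta' right_diff_distrib)
    also have "\<dots>\<^sup>2 \<le> sq_norm \<pi> * sq_norm (\<lambda>t \<omega>. w n t \<omega> - v t \<omega>)"
      unfolding sq_norm_def
      using Cauchy_Schwarz_integral[OF HF_measurable[OF price] HF_measurable[OF d]]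
        HF_square_integrable[OF price] HF_square_integrable[OF d]
      by (simp add: split_beta')
    finally show "((\<integral>(t, \<omega>). \<pi> t \<omega> * w n t \<omega> \<partial>P) - (\<integral>(t, \<omega>). \<pi> t \<omega> * v t \<omega> \<partial>P))\<^sup>2
        \<le> sq_norm \<pi> * sq_norm (\<lambda>t \<omega>. w n t \<omega> - v t \<omega>)" .
  next
    show "(\<lambda>n. sq_norm \<pi> * sq_norm (\<lambda>t \<omega>. w n t \<omega> - v t \<omega>)) \<longlonglongrightarrow> 0"
      using tendsto_mult_right_zero[OF L2] by simp
  qed
  then show ?thesis by (simp add: LIM_zero_iff)
qed

lemma state_L1_dist_square_le:
  assumes v: "HF M F T v" and w: "HF M F T w"
  shows "(\<integral>\<omega>. \<bar>state x0 v T \<omega> - state x0 w T \<omega>\<bar> \<partial>M)\<^sup>2 \<le> T * sq_norm (\<lambda>t \<omega>. v t \<omega> - w t \<omega>)"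
proof -
  have d: "HF M F T (\<lambda>t \<omega>. v t \<omega> - w t \<omega>)" by (rule HF_diff[OF v w])
  have abs_d: "integrable P (\<lambda>(t, \<omega>). \<bar>v t \<omega> - w t \<omega>\<bar>)"
    using integrable_abs[OF HF_integrable[OF d]] by (simp add: split_beta')
  have "(\<integral>\<omega>. \<bar>state x0 v T \<omega> - state x0 w T \<omega>\<bar> \<partial>M) \<le> (\<integral>\<omega>. (\<integral>t. \<bar>v t \<omega> - w t \<omega>\<bar> \<partial>D) \<partial>M)"
  proof (rule integral_mono_AE)
    show "AE \<omega> in M. \<bar>state x0 v T \<omega> - state x0 w T \<omega>\<bar> \<le> (\<integral>t. \<bar>v t \<omega> - w t \<omega>\<bar> \<partial>D)"
      using AE_state_diff[OF v w] by eventually_elim (simp add: integral_abs_bound)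
    show "integrable M (\<lambda>\<omega>. \<bar>state x0 v T \<omega> - state x0 w T \<omega>\<bar>)"
      using integrable_time_integral[OF HF_integrable[OF v]] integrable_time_integral[OF HF_integrable[OF w]]
      unfolding state_T_eq by simp
  qed (rule integrable_time_integral[OF abs_d])
  also have "\<dots> = (\<integral>p. 1 * \<bar>(\<lambda>(t, \<omega>). v t \<omega> - w t \<omega>) p\<bar> \<partial>P)"
    using integral_time_integral[OF abs_d] by (simp add: split_beta')
  finally have "(\<integral>\<omega>. \<bar>state x0 v T \<omega> - state x0 w T \<omega>\<bar> \<partial>M)\<^sup>2
      \<le> (\<integral>p. 1 * \<bar>(\<lambda>(t, \<omega>). v t \<omega> - w t \<omega>) p\<bar> \<partial>P)\<^sup>2"
    by (intro power_mono) (auto intro: integral_nonneg_AE)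
  also have "\<dots> \<le> (\<integral>p. 1\<^sup>2 \<partial>P) * (\<integral>p. \<bar>(\<lambda>(t, \<omega>). v t \<omega> - w t \<omega>) p\<bar>\<^sup>2 \<partial>P)"
    using HF_measurable[OF d] HF_square_integrable[OF d]
    by (intro Cauchy_Schwarz_integral) (auto simp: split_beta')
  also have "\<dots> = T * sq_norm (\<lambda>t \<omega>. v t \<omega> - w t \<omega>)"
    by (simp add: sq_norm_def measure_P_space split_beta')
  finally show ?thesis .
qed

lemma AE_state_tendsto_subseq:
  assumes w: "\<And>n. HF M F T (w n)" and v: "HF M F T v"
    and L2: "(\<lambda>n. sq_norm (\<lambda>t \<omega>. w n t \<omega> - v t \<omega>)) \<longlonglongrightarrow> 0"
  shows "\<exists>r. strict_mono r \<and> (AE \<omega> in M. (\<lambda>n. state x0 (w (r n)) T \<omega>) \<longlonglongrightarrow> state x0 v T \<omega>)"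
proof -
  define X where "X n \<omega> = state x0 (w n) T \<omega> - state x0 v T \<omega>" for n \<omega>
  have X_integrable: "integrable M (X n)" for n
    using integrable_time_integral[OF HF_integrable[OF w]] integrable_time_integral[OF HF_integrable[OF v]]
    unfolding X_def[abs_def] state_T_eq by simp
  have "(\<lambda>n. \<integral>\<omega>. norm (X n \<omega>) \<partial>M) \<longlonglongrightarrow> 0"
  proof (rule tendsto_zero_of_square_le)
    show "(\<integral>\<omega>. norm (X n \<omega>) \<partial>M)\<^sup>2 \<le> T * sq_norm (\<lambda>t \<omega>. w n t \<omega> - v t \<omega>)" for n
      using state_L1_dist_square_le[OF w v] by (simp add: X_def)
    show "(\<lambda>n. T * sq_norm (\<lambda>t \<omega>. w n t \<omega> - v t \<omega>)) \<longlonglongrightarrow> 0"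
      using tendsto_mult_right_zero[OF L2] by simp
  qed
  then obtain r where "strict_mono r" "AE \<omega> in M. (\<lambda>n. X (r n) \<omega>) \<longlonglongrightarrow> 0"
    using tendsto_L1_AE_subseq[of M X, OF X_integrable] by blast
  then show ?thesis
    unfolding X_def by (auto elim!: eventually_mono simp: LIM_zero_iff)
qed

lemma running_cost_le_of_AE_tendsto:
  assumes w: "\<And>n. HF M F T (w n)" and v: "HF M F T v"
    and AE_tendsto: "AE p in P. (\<lambda>n. case_prod (w n) p) \<longlonglongrightarrow> case_prod v p"
    and running_tendsto: "(\<lambda>n. \<integral>(t, \<omega>). l (w n t \<omega>) \<partial>P) \<longlonglongrightarrow> a"
  shows "(\<integral>(t, \<omega>). l (v t \<omega>) \<partial>P) \<le> a"
proof (rule Fatou_integral_le[where f = "\<lambda>n. \<lambda>(t, \<omega>). l (w n t \<omega>)"])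
  show "AE p in P. (\<lambda>n. (\<lambda>(t, \<omega>). l (w n t \<omega>)) p) \<longlonglongrightarrow> (\<lambda>(t, \<omega>). l (v t \<omega>)) p"
    using AE_tendsto by eventually_elim (simp add: split_beta' isCont_tendsto_compose[OF isCont_l])
qed (use integrable_running_cost[OF w] integrable_running_cost[OF v] l_nonneg running_tendsto in
  \<open>auto simp: split_beta'\<close>)

lemma terminal_cost_le_of_AE_tendsto:
  assumes w: "\<And>n. HF M F T (w n)" and v: "HF M F T v"
    and AE_tendsto: "AE \<omega> in M. (\<lambda>n. state x0 (w n) T \<omega>) \<longlonglongrightarrow> state x0 v T \<omega>"
    and terminal_tendsto: "(\<lambda>n. \<integral>\<omega>. \<Psi> (state x0 (w n) T \<omega>) \<partial>M) \<longlonglongrightarrow> a"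
  shows "(\<integral>\<omega>. \<Psi> (state x0 v T \<omega>) \<partial>M) \<le> a"
proof (rule Fatou_integral_le[where f = "\<lambda>n \<omega>. \<Psi> (state x0 (w n) T \<omega>)"])
  show "AE \<omega> in M. (\<lambda>n. \<Psi> (state x0 (w n) T \<omega>)) \<longlonglongrightarrow> \<Psi> (state x0 v T \<omega>)"
    using AE_tendsto by eventually_elim (simp add: isCont_tendsto_compose[OF isCont_\<Psi>])
qed (use integrable_terminal_cost[OF w] integrable_terminal_cost[OF v] \<Psi>_nonneg terminal_tendsto in auto)

lemma J_lower_semicontinuous:
  assumes w: "\<And>n. HF M F T (w n)" and v: "HF M F T v"
    and L2: "(\<lambda>n. sq_norm (\<lambda>t \<omega>. w n t \<omega> - v t \<omega>)) \<longlonglongrightarrow> 0"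
    and AE_tendsto: "AE p in P. (\<lambda>n. case_prod (w n) p) \<longlonglongrightarrow> case_prod v p"
    and J_tendsto: "(\<lambda>n. J (w n)) \<longlonglongrightarrow> m"
  shows "J v \<le> m"
proof -
  define A where "A n = (\<integral>(t, \<omega>). l (w n t \<omega>) \<partial>P)" for n
  define C where "C n = (\<integral>(t, \<omega>). \<pi> t \<omega> * w n t \<omega> \<partial>P)" for n
  define c where "c = (\<integral>(t, \<omega>). \<pi> t \<omega> * v t \<omega> \<partial>P)"
  define B where "B n = (\<integral>\<omega>. \<Psi> (state x0 (w n) T \<omega>) \<partial>M)" for n
  have J_w: "J (w n) = A n + C n + B n" for n by (simp add: J_def A_def B_def C_def)
  have C_tendsto: "C \<longlonglongrightarrow> c"
    unfolding C_def[abs_def] c_def by (rule price_term_tendsto[OF w v L2])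
  obtain r where r: "strict_mono r"
    and state_tendsto: "AE \<omega> in M. (\<lambda>n. state x0 (w (r n)) T \<omega>) \<longlonglongrightarrow> state x0 v T \<omega>"
    using AE_state_tendsto_subseq[OF w v L2] by blast
  have A_nonneg: "0 \<le> A n" and B_nonneg: "0 \<le> B n" for n
    unfolding A_def B_def using l_nonneg \<Psi>_nonneg by (auto intro!: integral_nonneg_AE simp: split_beta')
  have "convergent (\<lambda>n. J (w n) - C n)"
    using tendsto_diff[OF J_tendsto C_tendsto] by (rule convergentI)
  then obtain bound where bound: "\<forall>n. norm (J (w n) - C n) \<le> bound"
    using BseqE[OF convergent_imp_Bseq] by blast
  have "A n \<le> bound" for n
    using abs_le_D1[OF bound[rule_format, of n, unfolded real_norm_def]] J_w[of n] B_nonneg[of n]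
    by linarith
  then have "bounded (range (\<lambda>n. A (r n)))"
    using A_nonneg by (intro boundedI[of _ bound]) auto
  then obtain s a where s: "strict_mono s" and A_tendsto: "(\<lambda>n. A (r (s n))) \<longlonglongrightarrow> a"
    using bounded_imp_convergent_subsequence[of "\<lambda>n. A (r n)"] by (auto simp: o_def)
  have q: "strict_mono (r \<circ> s)" using r s by (rule strict_mono_o)
  have "(\<integral>(t, \<omega>). l (v t \<omega>) \<partial>P) \<le> a"
    using AE_tendsto A_tendsto
    by (intro running_cost_le_of_AE_tendsto[OF w v])
      (auto elim!: eventually_mono simp: A_def intro: LIMSEQ_subseq_LIMSEQ[OF _ q, unfolded o_def])
  moreover have "(\<integral>\<omega>. \<Psi> (state x0 v T \<omega>) \<partial>M) \<le> m - c - a"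
  proof (rule terminal_cost_le_of_AE_tendsto[OF w v])
    show "AE \<omega> in M. (\<lambda>n. state x0 (w (r (s n))) T \<omega>) \<longlonglongrightarrow> state x0 v T \<omega>"
      using state_tendsto by eventually_elim (rule LIMSEQ_subseq_LIMSEQ[OF _ s, unfolded o_def])
    have "(\<lambda>n. J (w (r (s n))) - C (r (s n)) - A (r (s n))) \<longlonglongrightarrow> m - c - a"
      using LIMSEQ_subseq_LIMSEQ[OF J_tendsto q] LIMSEQ_subseq_LIMSEQ[OF C_tendsto q] A_tendsto
      by (auto simp: o_def intro!: tendsto_diff)
    then show "(\<lambda>n. \<integral>\<omega>. \<Psi> (state x0 (w (r (s n))) T \<omega>) \<partial>M) \<longlonglongrightarrow> m - c - a"
      by (simp add: J_w B_def)
  qed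
  ultimately show ?thesis by (simp add: J_def c_def)
qed

lemma HF_pointwise_lim:
  assumes u: "\<And>n. HF M F T (u n)" and "integrable P (\<lambda>(t, \<omega>). (lim (\<lambda>n. u n t \<omega>))\<^sup>2)"
  shows "HF M F T (\<lambda>t \<omega>. lim (\<lambda>n. u n t \<omega>))"
  unfolding HF_iff
proof (intro conjI ballI)
  have [measurable]: "(\<lambda>p. u n (fst p) (snd p)) \<in> borel_measurable P" for n
    using HF_measurable[OF u] by (simp add: split_beta')
  show "(\<lambda>(t, \<omega>). lim (\<lambda>n. u n t \<omega>)) \<in> borel_measurable P"
    unfolding split_beta' by measurable
  show "(\<lambda>\<omega>. lim (\<lambda>n. u n t \<omega>)) \<in> borel_measurable (F t)" if "t \<in> {0..T}" for t
  proof -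
    have [measurable]: "u n t \<in> borel_measurable (F t)" for n using u[of n] that by (simp add: HF_iff)
    show ?thesis by measurable
  qed
qed (use assms(2) in simp)

lemma bdd_below_J: "bdd_below (J ` {v. HF M F T v})"
proof (rule bdd_belowI2)
  fix v assume "v \<in> {v. HF M F T v}"
  then have "\<alpha> / 2 * sq_norm v - (\<beta> * T + sq_norm \<pi> / (2 * \<alpha>)) \<le> J v"
    using J_coercive by simp
  moreover have "0 \<le> \<alpha> / 2 * sq_norm v" using \<alpha>_pos sq_norm_nonneg by simp
  ultimately show "- (\<beta> * T + sq_norm \<pi> / (2 * \<alpha>)) \<le> J v" by linarith
qed

lemma exists_J_minimiser: "\<exists>vs. HF M F T vs \<and> (\<forall>v. HF M F T v \<longrightarrow> J vs \<le> J v)"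
proof -
  define H where "H = {v. HF M F T v}"
  have "\<exists>u. (\<forall>n. u n \<in> H) \<and> (\<lambda>n. J (u n)) \<longlonglongrightarrow> Inf (J ` H)
      \<and> (\<forall>e>0. \<exists>n0. \<forall>n\<ge>n0. \<forall>k\<ge>n0. sq_norm (\<lambda>t \<omega>. u n t \<omega> - u k t \<omega>) < e)"
  proof (rule exists_Cauchy_minimising_sequence[where mid = "\<lambda>v w t \<omega>. (v t \<omega> + w t \<omega>) / 2"
        and a = "\<alpha> / 2" and K = "\<beta> * T + sq_norm \<pi> / (2 * \<alpha>)"])
    show "H \<noteq> {}" using HF_zero by (auto simp: H_def)
    show "J ((\<lambda>t \<omega>. (v t \<omega> + w t \<omega>) / 2)) \<le> (J v + J w) / 2" if "v \<in> H" "w \<in> H" for v w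
      using J_midpoint_le[of v w 0] convex_on_midpoint[OF l_convex] that by (simp add: H_def)
  qed (use \<alpha>_pos J_coercive HF_midpoint sq_norm_parallelogram sq_norm_nonneg in \<open>auto simp: H_def\<close>)
  then obtain u where u: "\<And>n. HF M F T (u n)" and J_u: "(\<lambda>n. J (u n)) \<longlonglongrightarrow> Inf (J ` H)"
    and Cauchy: "\<And>e. 0 < e \<Longrightarrow> \<exists>n0. \<forall>n\<ge>n0. \<forall>k\<ge>n0. sq_norm (\<lambda>t \<omega>. u n t \<omega> - u k t \<omega>) < e"
    by (auto simp: H_def)
  obtain r where r: "strict_mono r"
    and AE_lim: "AE p in P. (\<lambda>n. u (r n) (fst p) (snd p)) \<longlonglongrightarrow> lim (\<lambda>n. u (r n) (fst p) (snd p))"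
    and lim_sq: "integrable P (\<lambda>p. (lim (\<lambda>n. u (r n) (fst p) (snd p)))\<^sup>2)"
    and L2_lim: "(\<lambda>n. \<integral>p. (u (r n) (fst p) (snd p) - lim (\<lambda>n. u (r n) (fst p) (snd p)))\<^sup>2 \<partial>P) \<longlonglongrightarrow> 0"
    using L2_Cauchy_imp_AE_convergent_subseq[of "\<lambda>n p. u n (fst p) (snd p)" P]
      HF_measurable[OF u] HF_square_integrable[OF u] Cauchy
    by (auto simp: sq_norm_def split_beta')
  define vs where "vs t \<omega> = lim (\<lambda>n. u (r n) t \<omega>)" for t \<omega>
  have "HF M F T vs"
    unfolding vs_def using u lim_sq by (intro HF_pointwise_lim) (simp_all add: split_beta')
  moreover have "J vs \<le> Inf (J ` H)"
  proof (rule J_lower_semicontinuous[where w = "\<lambda>n. u (r n)"])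
    show "(\<lambda>n. J (u (r n))) \<longlonglongrightarrow> Inf (J ` H)"
      using LIMSEQ_subseq_LIMSEQ[OF J_u r] by (simp add: o_def)
  qed (use u \<open>HF M F T vs\<close> AE_lim L2_lim in \<open>simp_all add: vs_def sq_norm_def split_beta'\<close>)
  moreover have "Inf (J ` H) \<le> J v" if "HF M F T v" for v
    using bdd_below_J that by (intro cInf_lower) (simp_all add: H_def)
  ultimately show ?thesis by force
qed

lemma J_minimiser_unique:
  assumes "0 < \<kappa>" and l_midpoint: "\<And>x y. l ((x + y) / 2) + \<kappa> * (x - y)\<^sup>2 \<le> (l x + l y) / 2"
    and v: "HF M F T v" and v_min: "\<And>u. HF M F T u \<Longrightarrow> J v \<le> J u"
    and w: "HF M F T w" and w_min: "\<And>u. HF M F T u \<Longrightarrow> J w \<le> J u"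
  shows "AE p in P. w (fst p) (snd p) = v (fst p) (snd p)"
proof -
  have "J v \<le> J (\<lambda>t \<omega>. (w t \<omega> + v t \<omega>) / 2)" by (rule v_min[OF HF_midpoint[OF w v]])
  then have "\<kappa> * sq_norm (\<lambda>t \<omega>. w t \<omega> - v t \<omega>) \<le> 0"
    using J_midpoint_le[OF w v l_midpoint] v_min[OF w] w_min[OF v] by argo
  then have "sq_norm (\<lambda>t \<omega>. w t \<omega> - v t \<omega>) = 0"
    using \<open>0 < \<kappa>\<close> sq_norm_nonneg by (simp add: mult_le_0_iff order.antisym)
  then have "AE p in P. (w (fst p) (snd p) - v (fst p) (snd p))\<^sup>2 = 0"
    using HF_square_integrable[OF HF_diff[OF w v]]
    by (subst integral_nonneg_eq_0_iff_AE[symmetric]) (auto simp: sq_norm_def split_beta')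
  then show ?thesis by eventually_elim simp
qed

end

theorem proposition3p2:
  fixes M :: "'a measure" and B :: "real \<Rightarrow> 'a \<Rightarrow> real" and T :: real
    and L Lx Lv :: "real \<Rightarrow> real \<Rightarrow> real" and \<Psi> \<Psi>' :: "real \<Rightarrow> real"
    and x0 :: real and \<pi> :: "real \<Rightarrow> 'a \<Rightarrow> real"
  defines "F \<equiv> brownian_filtration M B"
  assumes T: "T > 0"
    and bm: "brownian_motion M B"
    and complete: "complete_measure M"
    \<comment> \<open>(i) L is C^1 on R^2 with partial derivatives Lx, Lv, nonnegative, jointly convex\<close>
    and L_deriv: "\<And>x v. ((\<lambda>p. L (fst p) (snd p)) has_derivative
                        (\<lambda>h. Lx x v * fst h + Lv x v * snd h)) (at (x, v))"
    and Lx_cont: "continuous_on UNIV (\<lambda>p. Lx (fst p) (snd p))"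
    and Lv_cont: "continuous_on UNIV (\<lambda>p. Lv (fst p) (snd p))"
    and L_nonneg: "\<And>x v. L x v \<ge> 0"
    and L_convex: "convex_on UNIV (\<lambda>p. L (fst p) (snd p))"
    \<comment> \<open>(ii) Psi is C^1, nonnegative, convex\<close>
    and Psi_deriv: "\<And>x. (\<Psi> has_real_derivative \<Psi>' x) (at x)"
    and Psi'_cont: "continuous_on UNIV \<Psi>'"
    and Psi_nonneg: "\<And>x. \<Psi> x \<ge> 0"
    and Psi_convex: "convex_on UNIV \<Psi>"
    \<comment> \<open>(iii)\<close>
    and Psi_growth: "\<exists>C Ct. C > 0 \<and> Ct > 0 \<and>
                       (\<forall>x. \<Psi> x \<le> C * (1 + \<bar>x\<bar>\<^sup>2) \<and> \<bar>\<Psi>' x\<bar> \<le> Ct * (1 + \<bar>x\<bar>))"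
    \<comment> \<open>(iv)\<close>
    and L_growth: "\<exists>\<beta>t C. \<beta>t > 0 \<and> C > 0 \<and>
                     (\<forall>x v. L x v \<le> \<beta>t * (1 + \<bar>v\<bar>\<^sup>2) \<and>
                            \<bar>Lx x v\<bar> \<le> C * (1 + \<bar>v\<bar>) \<and> \<bar>Lv x v\<bar> \<le> C * (1 + \<bar>v\<bar>))"
    \<comment> \<open>(v)\<close>
    and L_coercive: "\<exists>\<alpha> \<beta>. \<alpha> > 0 \<and> \<beta> \<ge> 0 \<and> (\<forall>x v. \<alpha> * \<bar>v\<bar>\<^sup>2 - \<beta> \<le> L x v)"
    \<comment> \<open>price process\<close>
    and price: "HF M F T \<pi>"
  shows "\<exists>vs. HF M F T vs \<and>
           (\<forall>v. HF M F T v \<longrightarrow> cost M T L \<Psi> \<pi> x0 vs \<le> cost M T L \<Psi> \<pi> x0 v) \<and>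
           ((\<exists>\<theta>>0. \<forall>x. convex_on UNIV (\<lambda>v. L x v - \<theta> / 2 * \<bar>v\<bar>\<^sup>2)) \<longrightarrow>
              (\<forall>w. HF M F T w \<and>
                   (\<forall>v. HF M F T v \<longrightarrow> cost M T L \<Psi> \<pi> x0 w \<le> cost M T L \<Psi> \<pi> x0 v)
                 \<longrightarrow> (AE p in time_space T M. w (fst p) (snd p) = vs (fst p) (snd p))))"
proof -
  obtain K where \<Psi>_upper: "\<And>x. \<Psi> x \<le> K * (1 + x\<^sup>2)" using Psi_growth by auto
  obtain b where L_upper: "\<And>x v. L x v \<le> b * (1 + v\<^sup>2)" using L_growth by auto
  obtain \<alpha> \<beta> where "0 < \<alpha>" and L_lower: "\<And>x v. \<alpha> * v\<^sup>2 - \<beta> \<le> L x v" using L_coercive by auto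
  define l where "l = L 0"
  have L_eq: "L x v = l v" for x v
    unfolding l_def using L_upper
    by (rule convex_on_bounded_above_imp_constant[OF convex_on_slices(1)[OF L_convex]])
  interpret control_problem M F T l \<Psi> \<pi> x0 \<alpha> \<beta> b K
  proof (rule control_problem.intro)
    show "prob_space M" using bm by (simp add: brownian_motion_def)
    show "convex_on UNIV l" unfolding l_def by (rule convex_on_slices(2)[OF L_convex])
  qed (use T L_nonneg L_upper L_lower \<open>0 < \<alpha>\<close> Psi_nonneg Psi_convex \<Psi>_upper price in
    \<open>simp_all add: l_def\<close>)
  obtain vs where vs: "HF M F T vs" and vs_min: "\<forall>v. HF M F T v \<longrightarrow> J vs \<le> J v"
    using exists_J_minimiser by blast
  have cost_min_iff: "(\<forall>v. HF M F T v \<longrightarrow> cost M T L \<Psi> \<pi> x0 w \<le> cost M T L \<Psi> \<pi> x0 v)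
      \<longleftrightarrow> (\<forall>v. HF M F T v \<longrightarrow> J w \<le> J v)" if "HF M F T w" for w
    using that cost_eq_J[OF L_eq] by auto
  have l_midpoint: "l ((x + y) / 2) + \<theta> / 8 * (x - y)\<^sup>2 \<le> (l x + l y) / 2"
    if "convex_on UNIV (\<lambda>v. L 0 v - \<theta> / 2 * \<bar>v\<bar>\<^sup>2)" for \<theta> x y
    using convex_minus_square_imp_midpoint[OF that] by (simp add: l_def)
  show ?thesis
    using vs vs_min cost_min_iff J_minimiser_unique[OF _ l_midpoint vs] by (intro exI[of _ vs]) force
qed

end
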